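(* For every finite graph $G$, $\mathrm{mcw}(G) \leq \mathrm{tw}(G)+2$.
   Context: The tree-width $\mathrm{tw}(G)$ is the minimum width (largest bag size minus one) of a tree decomposition of $G$ (a tree $T$ with bags $B_i\subseteq V$ covering all vertices and all edges, such that for each vertex the nodes whose bags contain it form a connected subtree). A multi-$k$-expression is built as follows, where each vertex carries a (possibly empty) set of labels from $\{1,\dots,k\}$: atoms $m\langle i_1,\dots,i_\ell\rangle$ (with $m$ a positive integer and $i_1<\dots<i_\ell\le k$, possibly $\ell=0$) create $m$ vertices, each with label set $\{i_1,\dots,i_\ell\}$; $\eta_{i,j}$ creates an edge between every vertex having label $i$ and every vertex having label $j$, allowed only when no vertex has both labels $i$ and $j$; $\rho_{i\to S}$ for $S\subseteq\{1,\dots,k\}$ replaces label $i$ by the set $S$ (a vertex with label set $S'\ni i$ gets $(S'\setminus\{i\})\cup S$); $\varepsilon_i$ deletes label $i$ from all vertices; $\oplus$ is disjoint union. The generated graph is obtained by deleting all labels. The multi-clique-width $\mathrm{mcw}(G)$ is the smallest $k$ such that $G$ is generated by a multi-$k$-expression. *)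

theory Defs
  imports Main
begin

definition graph :: "'a set \<Rightarrow> 'a set set \<Rightarrow> bool" where
  "graph V E \<longleftrightarrow> (\<forall>e\<in>E. \<exists>u v. e = {u, v} \<and> u \<noteq> v \<and> u \<in> V \<and> v \<in> V)"

definition finite_graph :: "'a set \<Rightarrow> 'a set set \<Rightarrow> bool" where
  "finite_graph V E \<longleftrightarrow> graph V E \<and> finite V"

fun walk :: "'b set set \<Rightarrow> 'b list \<Rightarrow> bool" where
  "walk TE [] = False"
| "walk TE [x] = True"
| "walk TE (x # y # xs) = ({x, y} \<in> TE \<and> walk TE (y # xs))"

definition connected_on :: "'b set \<Rightarrow> 'b set set \<Rightarrow> bool" where
  "connected_on N TE \<longleftrightarrow>
     (\<forall>x\<in>N. \<forall>y\<in>N. \<exists>p. walk TE p \<and> hd p = x \<and> last p = y \<and> set p \<subseteq> N)"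

definition has_cycle :: "'b set \<Rightarrow> 'b set set \<Rightarrow> bool" where
  "has_cycle N TE \<longleftrightarrow>
     (\<exists>p. length p \<ge> 3 \<and> distinct p \<and> set p \<subseteq> N \<and> walk TE p \<and> {last p, hd p} \<in> TE)"

definition is_tree :: "'b set \<Rightarrow> 'b set set \<Rightarrow> bool" where
  "is_tree N TE \<longleftrightarrow> finite N \<and> N \<noteq> {} \<and> graph N TE \<and> connected_on N TE \<and> \<not> has_cycle N TE"

text \<open>Tree nodes are taken to be natural numbers (every finite tree is isomorphic to one on nat).\<close>

definition tree_decomposition ::
  "'a set \<Rightarrow> 'a set set \<Rightarrow> nat set \<Rightarrow> nat set set \<Rightarrow> (nat \<Rightarrow> 'a set) \<Rightarrow> bool" where
  "tree_decomposition V E N TE B \<longleftrightarrow>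
     is_tree N TE \<and>
     (\<forall>i\<in>N. B i \<subseteq> V) \<and>
     (\<forall>v\<in>V. \<exists>i\<in>N. v \<in> B i) \<and>
     (\<forall>u v. {u, v} \<in> E \<longrightarrow> (\<exists>i\<in>N. u \<in> B i \<and> v \<in> B i)) \<and>
     (\<forall>v\<in>V. connected_on {i\<in>N. v \<in> B i} TE)"

definition decomposition_width :: "nat set \<Rightarrow> (nat \<Rightarrow> 'a set) \<Rightarrow> nat" where
  "decomposition_width N B = Max (card ` B ` N) - 1"

definition treewidth :: "'a set \<Rightarrow> 'a set set \<Rightarrow> nat" where
  "treewidth V E = (LEAST w. \<exists>N TE B. tree_decomposition V E N TE B \<and> decomposition_width N B = w)"

datatype mexpr =
    Atom nat "nat set"          (* m<S>: m vertices each with label set S *)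
  | Eta nat nat mexpr
  | Rho nat "nat set" mexpr
  | Eps nat mexpr
  | Union mexpr mexpr

type_synonym lgraph = "nat list set \<times> nat list set set \<times> (nat list \<Rightarrow> nat set)"

text \<open>Concrete evaluation: vertices are nat lists (position in the expression tree plus index).\<close>

fun eval :: "mexpr \<Rightarrow> lgraph" where
  "eval (Atom m S) = ({[i] | i. i < m}, {}, (\<lambda>_. S))"
| "eval (Eta i j e) = (case eval e of (V, E, L) \<Rightarrow>
      (V, E \<union> {{u, v} | u v. u \<in> V \<and> v \<in> V \<and> i \<in> L u \<and> j \<in> L v}, L))"
| "eval (Rho i S e) = (case eval e of (V, E, L) \<Rightarrow>
      (V, E, (\<lambda>v. if i \<in> L v then (L v - {i}) \<union> S else L v)))"
| "eval (Eps i e) = (case eval e of (V, E, L) \<Rightarrow> (V, E, (\<lambda>v. L v - {i})))"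
| "eval (Union e1 e2) = (case eval e1 of (V1, E1, L1) \<Rightarrow> case eval e2 of (V2, E2, L2) \<Rightarrow>
      ((\<lambda>v. 0 # v) ` V1 \<union> (\<lambda>v. 1 # v) ` V2,
       (\<lambda>e. (\<lambda>v. 0 # v) ` e) ` E1 \<union> (\<lambda>e. (\<lambda>v. 1 # v) ` e) ` E2,
       (\<lambda>v. case v of 0 # w \<Rightarrow> L1 w | _ # w \<Rightarrow> L2 w | [] \<Rightarrow> {})))"

fun mexpr_ok :: "nat \<Rightarrow> mexpr \<Rightarrow> bool" where
  "mexpr_ok k (Atom m S) = (m > 0 \<and> S \<subseteq> {1..k})"
| "mexpr_ok k (Eta i j e) = (mexpr_ok k e \<and> i \<in> {1..k} \<and> j \<in> {1..k} \<and>
      (case eval e of (V, E, L) \<Rightarrow> \<not> (\<exists>v\<in>V. i \<in> L v \<and> j \<in> L v)))"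
| "mexpr_ok k (Rho i S e) = (mexpr_ok k e \<and> i \<in> {1..k} \<and> S \<subseteq> {1..k})"
| "mexpr_ok k (Eps i e) = (mexpr_ok k e \<and> i \<in> {1..k})"
| "mexpr_ok k (Union e1 e2) = (mexpr_ok k e1 \<and> mexpr_ok k e2)"

definition generates :: "mexpr \<Rightarrow> 'a set \<Rightarrow> 'a set set \<Rightarrow> bool" where
  "generates e V E \<longleftrightarrow> (case eval e of (V', E', L) \<Rightarrow>
     (\<exists>f. bij_betw f V' V \<and> (\<forall>u\<in>V'. \<forall>v\<in>V'. {u, v} \<in> E' \<longleftrightarrow> {f u, f v} \<in> E)))"

definition mcw :: "'a set \<Rightarrow> 'a set set \<Rightarrow> nat" where
  "mcw V E = (LEAST k. \<exists>e. mexpr_ok k e \<and> generates e V E)"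

end

theory Submission
  imports Defs
begin

text \<open>Take a tree decomposition of minimum width \<open>w\<close> and put \<open>K = w + 1\<close>. Colour the vertices
  with \<open>1..K\<close> so that the colours within every bag are distinct, extending the colouring across
  one tree edge at a time. The expression uses the labels \<open>1..K+1\<close> with the invariant that each
  vertex of the part \<open>S\<close> built so far carries the colours of its neighbours outside \<open>S\<close>.
  A vertex \<open>x\<close> is inserted by creating it with the free label \<open>K+1\<close> and joining \<open>K+1\<close> to \<open>c x\<close>;
  this reaches exactly the neighbours of \<open>x\<close> in \<open>S\<close> provided no other pending neighbour has
  colour \<open>c x\<close>, which holds when \<open>x\<close> and the pending neighbours lie in one bag. Splitting the tree
  at an edge \<open>r s\<close>, the vertices of the two halves outside \<open>B r\<close> are not adjacent to each other,
  so recursively the parts are built separately and combined by disjoint union.\<close>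

lemma walk_not_Nil: "walk TE p \<Longrightarrow> p \<noteq> []"
  by (cases p) auto

lemma walk_Cons_iff: "walk TE (x # p) \<longleftrightarrow> p = [] \<or> {x, hd p} \<in> TE \<and> walk TE p"
  by (cases p) auto

lemma walk_append_iff:
  "p \<noteq> [] \<Longrightarrow> q \<noteq> [] \<Longrightarrow> walk TE (p @ q) \<longleftrightarrow> walk TE p \<and> walk TE q \<and> {last p, hd q} \<in> TE"
proof (induction p)
  case (Cons x p)
  then show ?case
    by (cases "p = []") (auto simp: walk_Cons_iff[of TE x])
qed simp

lemma walk_append_tl:
  assumes "walk TE p" "walk TE q" "last p = hd q"
  shows "walk TE (p @ tl q)"
proof (cases "tl q = []")
  case False
  have "q = hd q # tl q" using walk_not_Nil[OF assms(2)] by simp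
  then have "walk TE (tl q)" "{hd q, hd (tl q)} \<in> TE"
    using assms(2) False walk_Cons_iff[of TE "hd q" "tl q"] by auto
  then show ?thesis
    using walk_append_iff[OF walk_not_Nil[OF assms(1)] False] assms by simp
qed (use assms in simp)

lemma walk_rev: "walk TE p \<Longrightarrow> walk TE (rev p)"
proof (induction TE p rule: walk.induct)
  case (3 TE x y xs)
  then show ?case
    using walk_append_iff[of "rev (y # xs)" "[x]" TE] by (simp add: insert_commute)
qed simp_all

lemma walk_mono: "walk TE p \<Longrightarrow> TE \<subseteq> TE' \<Longrightarrow> walk TE' p"
  by (induction TE p rule: walk.induct) auto

lemma walk_restrict: "walk TE p \<Longrightarrow> set p \<subseteq> A \<Longrightarrow> walk {e \<in> TE. e \<subseteq> A} p"
  by (induction TE p rule: walk.induct) auto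

lemma walk_remove_cycle:
  assumes "walk TE (xs @ [y] @ ys @ [y] @ zs)"
  shows "walk TE (xs @ [y] @ zs)"
proof -
  have "walk TE (xs @ [y])" "walk TE ([y] @ zs)"
    using assms walk_append_iff[of "xs @ [y]" "ys @ [y] @ zs" TE]
      walk_append_iff[of "xs @ [y] @ ys" "[y] @ zs" TE] by auto
  from walk_append_tl[OF this] show ?thesis by simp
qed

lemma walk_obtain_path:
  assumes "walk TE p"
  obtains q where "walk TE q" "distinct q" "hd q = hd p" "last q = last p" "set q \<subseteq> set p"
  using assms
proof (induction "length p" arbitrary: p rule: less_induct)
  case less
  show ?case
  proof (cases "distinct p")
    case False
    then obtain xs y ys zs where p: "p = xs @ [y] @ ys @ [y] @ zs"
      using not_distinct_decomp by blast
    let ?p' = "xs @ [y] @ zs"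
    have "walk TE ?p'" using walk_remove_cycle less.prems(2) p by simp
    moreover have "hd ?p' = hd p" "last ?p' = last p" "set ?p' \<subseteq> set p"
      using p by (cases xs; cases zs; auto)+
    ultimately show ?thesis
      using less.hyps[of ?p'] less.prems(1) p by fastforce
  qed (use less.prems in blast)
qed

section \<open>Cutting a tree at an edge\<close>

definition edge_cut :: "'b set set \<Rightarrow> 'b set \<Rightarrow> 'b \<Rightarrow> 'b \<Rightarrow> bool" where
  "edge_cut TE A a b \<longleftrightarrow> a \<in> A \<and> b \<notin> A \<and> {a, b} \<in> TE \<and>
     (\<forall>x y. {x, y} \<in> TE \<longrightarrow> x \<in> A \<longrightarrow> y \<notin> A \<longrightarrow> x = a \<and> y = b)"

lemma edge_cut_Compl: "edge_cut TE A a b \<Longrightarrow> edge_cut TE (- A) b a"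
  unfolding edge_cut_def by (metis ComplD ComplI insert_commute)

lemma edge_cut_leave: "edge_cut TE A a b \<Longrightarrow> {x, y} \<in> TE \<Longrightarrow> x \<in> A \<Longrightarrow> y \<notin> A \<Longrightarrow> x = a"
  unfolding edge_cut_def by blast

lemma walk_leaves_through_cut:
  assumes "edge_cut TE A a b"
  shows "walk TE p \<Longrightarrow> hd p \<in> A \<Longrightarrow> \<not> set p \<subseteq> A \<Longrightarrow>
    \<exists>q. walk TE q \<and> hd q = hd p \<and> last q = a \<and> set q \<subseteq> set p \<inter> A"
proof (induction p)
  case (Cons x p)
  then have "p \<noteq> []" "{x, hd p} \<in> TE" "walk TE p" "x \<in> A"
    using walk_Cons_iff[of TE x p] by auto
  show ?case
  proof (cases "hd p \<in> A")
    case False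
    then have "x = a" using edge_cut_leave[OF assms] \<open>{x, hd p} \<in> TE\<close> \<open>x \<in> A\<close> by blast
    then show ?thesis using \<open>x \<in> A\<close> by (intro exI[of _ "[x]"]) auto
  next
    case True
    then obtain q where q: "walk TE q" "hd q = hd p" "last q = a" "set q \<subseteq> set p \<inter> A"
      using Cons \<open>walk TE p\<close> \<open>x \<in> A\<close> by auto
    then have "walk TE (x # q)"
      using \<open>{x, hd p} \<in> TE\<close> walk_Cons_iff[of TE x q] by simp
    then show ?thesis using q \<open>x \<in> A\<close> walk_not_Nil[OF q(1)] by (intro exI[of _ "x # q"]) auto
  qed
qed simp

lemma connected_on_cut_side:
  assumes conn: "connected_on M TE" and cut: "edge_cut TE A a b" and "M \<subseteq> N"
  shows "connected_on (M \<inter> A) {e \<in> TE. e \<subseteq> N \<inter> A}"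
  unfolding connected_on_def
proof (intro ballI)
  fix x y assume x: "x \<in> M \<inter> A" and y: "y \<in> M \<inter> A"
  obtain p where p: "walk TE p" "hd p = x" "last p = y" "set p \<subseteq> M"
    using conn x y unfolding connected_on_def by blast
  have "\<exists>p'. walk TE p' \<and> hd p' = x \<and> last p' = y \<and> set p' \<subseteq> M \<inter> A"
  proof (cases "set p \<subseteq> A")
    case False
    obtain q1 where q1: "walk TE q1" "hd q1 = x" "last q1 = a" "set q1 \<subseteq> set p \<inter> A"
      using walk_leaves_through_cut[OF cut p(1)] p(2) x False by auto
    have "hd (rev p) = y" using p(3) walk_not_Nil[OF p(1)] by (simp add: hd_rev)
    then obtain q2 where q2: "walk TE q2" "hd q2 = y" "last q2 = a" "set q2 \<subseteq> set p \<inter> A"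
      using walk_leaves_through_cut[OF cut walk_rev[OF p(1)]] y False by auto
    have ne: "q2 \<noteq> []" using walk_not_Nil[OF q2(1)] .
    have "last (q1 @ tl (rev q2)) = y"
      using ne q1(3) q2(2,3) by (cases "rev q2") (auto simp: last_rev[symmetric])
    moreover have "set (q1 @ tl (rev q2)) \<subseteq> M \<inter> A"
    proof -
      have "set (tl (rev q2)) \<subseteq> set (rev q2)" by (cases "rev q2") auto
      then show ?thesis using q1(4) q2(4) p(4) by auto
    qed
    ultimately show ?thesis
      using walk_append_tl[OF q1(1) walk_rev[OF q2(1)]] q1(2,3) q2(3) ne
      by (intro exI[of _ "q1 @ tl (rev q2)"]) (auto simp: hd_rev walk_not_Nil[OF q1(1)])
  qed (use p in blast)
  then show "\<exists>p'. walk {e \<in> TE. e \<subseteq> N \<inter> A} p' \<and> hd p' = x \<and> last p' = y \<and> set p' \<subseteq> M \<inter> A"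
    using walk_restrict[of TE _ "N \<inter> A"] \<open>M \<subseteq> N\<close> by blast
qed

lemma connected_on_across_cut:
  assumes conn: "connected_on M TE" and cut: "edge_cut TE A a b"
    and "x \<in> M \<inter> A" "y \<in> M - A"
  shows "a \<in> M" "b \<in> M"
proof -
  obtain p where p: "walk TE p" "hd p = x" "last p = y" "set p \<subseteq> M"
    using conn assms(3,4) unfolding connected_on_def by blast
  have ne: "p \<noteq> []" using walk_not_Nil[OF p(1)] .
  have "x \<in> set p" "y \<in> set p" using p(2,3) ne by auto
  obtain q where "walk TE q" "last q = a" "set q \<subseteq> set p \<inter> A"
    using walk_leaves_through_cut[OF cut p(1)] p(2) \<open>y \<in> set p\<close> assms(3,4) by fastforce
  then show "a \<in> M" using walk_not_Nil p(4) by fastforce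
  obtain q' where "walk TE q'" "last q' = b" "set q' \<subseteq> set p \<inter> - A"
    using walk_leaves_through_cut[OF edge_cut_Compl[OF cut] walk_rev[OF p(1)]] p(3) ne \<open>x \<in> set p\<close> assms(3,4)
    by (fastforce simp: hd_rev)
  then show "b \<in> M" using walk_not_Nil p(4) by fastforce
qed

lemma tree_edge: "is_tree N TE \<Longrightarrow> {x, y} \<in> TE \<Longrightarrow> x \<in> N \<and> y \<in> N \<and> x \<noteq> y"
  unfolding is_tree_def graph_def by (metis doubleton_eq_iff)

lemma tree_no_walk_around_edge:
  assumes t: "is_tree N TE" and e: "{r, s} \<in> TE"
    and p: "walk (TE - {{r, s}}) p" "hd p = r" "last p = s" "set p \<subseteq> N"
  shows False
proof -
  obtain q where q: "walk (TE - {{r, s}}) q" "distinct q" "hd q = r" "last q = s" "set q \<subseteq> set p"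
    using walk_obtain_path[OF p(1)] p(2,3) by metis
  have "r \<noteq> s" using tree_edge[OF t e] by simp
  then have "length q \<noteq> 0" "length q \<noteq> 1" using q(3,4) walk_not_Nil[OF q(1)]
    by (auto simp: length_Suc_conv)
  moreover have "length q \<noteq> 2"
    using q(1,3,4) by (auto simp: length_Suc_conv numeral_2_eq_2)
  ultimately have "length q \<ge> 3" by linarith
  moreover have "walk TE q" using walk_mono[OF q(1)] by blast
  moreover have "{last q, hd q} \<in> TE" using q(3,4) e by (simp add: insert_commute)
  ultimately have "has_cycle N TE"
    unfolding has_cycle_def using q(2,5) p(4) by blast
  then show False using t unfolding is_tree_def by blast
qed

lemma tree_edge_cut:
  assumes t: "is_tree N TE" and e: "{r, s} \<in> TE"
  shows "\<exists>A. edge_cut TE A r s"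
proof -
  define A where "A = {x. \<exists>p. walk (TE - {{r, s}}) p \<and> hd p = r \<and> last p = x \<and> set p \<subseteq> N}"
  have "r \<in> A" unfolding A_def using tree_edge[OF t e] by (intro CollectI exI[of _ "[r]"]) auto
  have "s \<notin> A" unfolding A_def using tree_no_walk_around_edge[OF t e] by blast
  have extend: "y \<in> A" if "x \<in> A" "{x, y} \<in> TE" "{x, y} \<noteq> {r, s}" for x y
  proof -
    obtain p where p: "walk (TE - {{r, s}}) p" "hd p = r" "last p = x" "set p \<subseteq> N"
      using \<open>x \<in> A\<close> unfolding A_def by blast
    then have "walk (TE - {{r, s}}) (p @ [y])"
      using walk_append_iff[OF walk_not_Nil[OF p(1)], of "[y]"] that by simp
    then show ?thesis
      unfolding A_def using p walk_not_Nil[OF p(1)] tree_edge[OF t \<open>{x, y} \<in> TE\<close>]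
      by (intro CollectI exI[of _ "p @ [y]"]) auto
  qed
  have "edge_cut TE A r s"
    unfolding edge_cut_def
  proof (intro conjI allI impI)
    fix x y assume "{x, y} \<in> TE" "x \<in> A" "y \<notin> A"
    then have "{x, y} = {r, s}" using extend by blast
    then show "x = r" "y = s" using \<open>x \<in> A\<close> \<open>s \<notin> A\<close> by (auto simp: doubleton_eq_iff)
  qed (use \<open>r \<in> A\<close> \<open>s \<notin> A\<close> e in auto)
  then show ?thesis by blast
qed

lemma is_tree_cut_side:
  assumes t: "is_tree N TE" and cut: "edge_cut TE A a b"
  shows "is_tree (N \<inter> A) {e \<in> TE. e \<subseteq> N \<inter> A}"
proof -
  have "a \<in> N \<inter> A" using cut tree_edge[OF t] unfolding edge_cut_def by blast
  moreover have "graph (N \<inter> A) {e \<in> TE. e \<subseteq> N \<inter> A}"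
    using t unfolding is_tree_def graph_def by fastforce
  moreover have "connected_on (N \<inter> A) {e \<in> TE. e \<subseteq> N \<inter> A}"
    using connected_on_cut_side[OF _ cut order_refl] t unfolding is_tree_def by blast
  moreover have "has_cycle N TE" if cyc: "has_cycle (N \<inter> A) {e \<in> TE. e \<subseteq> N \<inter> A}"
  proof -
    obtain p where "length p \<ge> 3" "distinct p" "set p \<subseteq> N \<inter> A"
      "walk {e \<in> TE. e \<subseteq> N \<inter> A} p" "{last p, hd p} \<in> {e \<in> TE. e \<subseteq> N \<inter> A}"
      using cyc unfolding has_cycle_def by blast
    then show ?thesis unfolding has_cycle_def using walk_mono[of _ p TE] by blast
  qed
  ultimately show ?thesis using t unfolding is_tree_def by blast
qed

lemma tree_split:
  assumes t: "is_tree N TE" and r: "r \<in> N" and u: "u \<in> N" "u \<noteq> r"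
  obtains s A where "edge_cut TE A r s" "r \<in> N \<inter> A" "s \<in> N \<inter> - A"
    "card (N \<inter> A) < card N" "card (N \<inter> - A) < card N"
proof -
  obtain p where p: "walk TE p" "hd p = r" "last p = u"
    using t r u unfolding is_tree_def connected_on_def by blast
  then obtain p' where "p = r # p'" "p' \<noteq> []" using u(2) by (cases p) (auto split: if_splits)
  then obtain s where "{r, s} \<in> TE" using p(1) walk_Cons_iff[of TE r p'] by blast
  then obtain A where cut: "edge_cut TE A r s" using tree_edge_cut[OF t] by blast
  then have "r \<in> N \<inter> A" "s \<in> N \<inter> - A"
    using r tree_edge[OF t \<open>{r, s} \<in> TE\<close>] unfolding edge_cut_def by auto
  moreover have "finite N" using t unfolding is_tree_def by simp
  then have "card (N \<inter> A) < card N" "card (N \<inter> - A) < card N"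
    using \<open>r \<in> N \<inter> A\<close> \<open>s \<in> N \<inter> - A\<close> by (auto intro!: psubset_card_mono)
  ultimately show ?thesis using that[OF cut] by blast
qed

section \<open>Rainbow colourings of tree decompositions\<close>

definition connected_bags :: "'b set \<Rightarrow> 'b set set \<Rightarrow> ('b \<Rightarrow> 'a set) \<Rightarrow> bool" where
  "connected_bags N TE B \<longleftrightarrow> (\<forall>v. connected_on {i \<in> N. v \<in> B i} TE)"

lemma tree_decomposition_connected_bags:
  assumes "tree_decomposition V E N TE B"
  shows "connected_bags N TE B"
  unfolding connected_bags_def
proof
  fix v
  show "connected_on {i \<in> N. v \<in> B i} TE"
  proof (cases "v \<in> V")
    case False
    then have "{i \<in> N. v \<in> B i} = {}" using assms unfolding tree_decomposition_def by blast
    then show ?thesis unfolding connected_on_def by auto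
  qed (use assms in \<open>simp add: tree_decomposition_def\<close>)
qed

lemma connected_bags_cut_side:
  assumes "connected_bags N TE B" "edge_cut TE A a b"
  shows "connected_bags (N \<inter> A) {e \<in> TE. e \<subseteq> N \<inter> A} B"
  unfolding connected_bags_def
proof
  fix v
  have "{i \<in> N \<inter> A. v \<in> B i} = {i \<in> N. v \<in> B i} \<inter> A" by blast
  then show "connected_on {i \<in> N \<inter> A. v \<in> B i} {e \<in> TE. e \<subseteq> N \<inter> A}"
    using connected_on_cut_side[OF _ assms(2), of _ N] assms(1)
    unfolding connected_bags_def by auto
qed

lemma bag_across_cut:
  assumes "connected_bags N TE B" "edge_cut TE A a b"
    and "i \<in> N \<inter> A" "j \<in> N \<inter> - A" "v \<in> B i" "v \<in> B j"
  shows "v \<in> B a" "v \<in> B b"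
  using connected_on_across_cut[of "{i \<in> N. v \<in> B i}" TE A a b i j] assms
  unfolding connected_bags_def by auto

lemma covered_edge_on_side:
  assumes conn: "connected_bags N TE B" and cut: "edge_cut TE A a b"
    and covered: "\<forall>u\<in>(\<Union>i\<in>N. B i) - B a. \<forall>w. {u, w} \<in> E \<longrightarrow> (\<exists>i\<in>N. u \<in> B i \<and> w \<in> B i)"
    and "P = A \<or> P = - A" "j \<in> N \<inter> P" "u \<in> B j" "u \<notin> B a" "{u, w} \<in> E"
  shows "\<exists>i\<in>N \<inter> P. u \<in> B i \<and> w \<in> B i"
proof -
  obtain i where i: "i \<in> N" "u \<in> B i" "w \<in> B i" using covered assms(5-8) by blast
  have "i \<in> P"
  proof (rule ccontr)
    assume "i \<notin> P"
    then have "u \<in> B a"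
      using bag_across_cut(1)[OF conn cut, of i j u] bag_across_cut(1)[OF conn cut, of j i u]
        i assms(4-6) by auto
    then show False using assms(7) by blast
  qed
  then show ?thesis using i by blast
qed

lemma inj_on_extend_into:
  assumes "finite X" "finite C" "card X \<le> card C" "Y \<subseteq> X" "inj_on c Y" "c ` Y \<subseteq> C"
  obtains c' where "inj_on c' X" "c' ` X \<subseteq> C" "\<And>v. v \<in> Y \<Longrightarrow> c' v = c v"
proof -
  have "finite Y" using assms(1,4) finite_subset by blast
  then have "card (X - Y) \<le> card (C - c ` Y)"
    using assms card_Diff_subset[of Y X] card_Diff_subset[of "c ` Y" C] card_image[OF assms(5)]
    by (simp add: card_mono)
  then obtain g where g: "g ` (X - Y) \<subseteq> C - c ` Y" "inj_on g (X - Y)"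
    using card_le_inj[of "X - Y" "C - c ` Y"] assms(1,2) by blast
  let ?c' = "\<lambda>v. if v \<in> Y then c v else g v"
  have "inj_on ?c' X"
    using g assms(5) by (auto simp: inj_on_def image_iff)
  moreover have "?c' ` X \<subseteq> C" using g assms(6) by auto
  ultimately show ?thesis using that[of ?c'] by simp
qed

lemma rainbow_colouring_extend:
  assumes "is_tree N TE" "r \<in> N" "connected_bags N TE B" "finite C"
    and "\<forall>i\<in>N. finite (B i) \<and> card (B i) \<le> card C"
    and "inj_on c0 (B r)" "c0 ` B r \<subseteq> C"
  shows "\<exists>c. (\<forall>i\<in>N. inj_on c (B i) \<and> c ` B i \<subseteq> C) \<and> (\<forall>v\<in>B r. c v = c0 v)"
  using assms
proof (induction "card N" arbitrary: N TE r c0 rule: less_induct)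
  case less
  note t = less.prems(1) and r = less.prems(2) and conn = less.prems(3) and bags = less.prems(5)
  show ?case
  proof (cases "N = {r}")
    case True
    then show ?thesis using less.prems(6,7) by blast
  next
    case False
    then obtain u where "u \<in> N" "u \<noteq> r" using r by blast
    then obtain s A where cut: "edge_cut TE A r s" and r1: "r \<in> N \<inter> A" and s2: "s \<in> N \<inter> - A"
      and "card (N \<inter> A) < card N" "card (N \<inter> - A) < card N"
      using tree_split[OF t r] by metis
    note IH = less.hyps[OF this(4) is_tree_cut_side[OF t cut] r1 connected_bags_cut_side[OF conn cut]]
      less.hyps[OF this(5) is_tree_cut_side[OF t edge_cut_Compl[OF cut]] s2
        connected_bags_cut_side[OF conn edge_cut_Compl[OF cut]]]
    obtain c1 where c1: "\<forall>i\<in>N \<inter> A. inj_on c1 (B i) \<and> c1 ` B i \<subseteq> C" "\<forall>v\<in>B r. c1 v = c0 v"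
      using IH(1)[OF less.prems(4) _ less.prems(6,7)] bags by auto
    obtain c0' where c0': "inj_on c0' (B s)" "c0' ` B s \<subseteq> C" "\<And>v. v \<in> B s \<inter> B r \<Longrightarrow> c0' v = c1 v"
    proof (rule inj_on_extend_into[of "B s" C "B s \<inter> B r" c1])
      show "inj_on c1 (B s \<inter> B r)" "c1 ` (B s \<inter> B r) \<subseteq> C"
        using c1(1) r1 by (auto intro: inj_on_subset)
    qed (use bags s2 less.prems(4) in auto)
    obtain c2 where c2: "\<forall>i\<in>N \<inter> - A. inj_on c2 (B i) \<and> c2 ` B i \<subseteq> C" "\<forall>v\<in>B s. c2 v = c0' v"
      using IH(2)[OF less.prems(4) _ c0'(1,2)] bags by auto
    define U1 where "U1 = (\<Union>i\<in>N \<inter> A. B i)"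
    define c where "c v = (if v \<in> U1 then c1 v else c2 v)" for v
    have "c v = c1 v" if "i \<in> N \<inter> A" "v \<in> B i" for i v
      using that unfolding c_def U1_def by auto
    note on_side1 = this
    moreover have "c v = c2 v" if "i \<in> N \<inter> - A" "v \<in> B i" for i v
      using bag_across_cut[OF conn cut _ that(1) _ that(2)] c0'(3) c2(2)
      unfolding c_def U1_def by auto
    ultimately have "inj_on c (B i) \<and> c ` B i \<subseteq> C" if "i \<in> N" for i
      using c1(1) c2(1) that inj_on_cong[of "B i" c] image_cong[of "B i" "B i" c]
      by (cases "i \<in> A") simp_all
    moreover have "\<forall>v\<in>B r. c v = c0 v" using on_side1[OF r1] c1(2) by simp
    ultimately show ?thesis by blast
  qed
qed

definition represents :: "mexpr \<Rightarrow> 'a set set \<Rightarrow> ('a \<Rightarrow> nat set) \<Rightarrow> 'a set \<Rightarrow> bool" where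
  "represents e E lab S \<longleftrightarrow> (case eval e of (V', E', L) \<Rightarrow>
     \<exists>f. bij_betw f V' S \<and> (\<forall>u\<in>V'. \<forall>v\<in>V'. {u, v} \<in> E' \<longleftrightarrow> {f u, f v} \<in> E)
        \<and> (\<forall>u\<in>V'. L u = lab (f u)))"

lemma representsE:
  assumes "represents e E lab S" "eval e = (V', E', L)"
  obtains f where "bij_betw f V' S" "\<And>u v. u \<in> V' \<Longrightarrow> v \<in> V' \<Longrightarrow> {u, v} \<in> E' \<longleftrightarrow> {f u, f v} \<in> E"
    "\<And>u. u \<in> V' \<Longrightarrow> L u = lab (f u)"
  using assms unfolding represents_def by auto

lemma representsI:
  assumes "eval e = (V', E', L)" "bij_betw f V' S"
    "\<And>u v. u \<in> V' \<Longrightarrow> v \<in> V' \<Longrightarrow> {u, v} \<in> E' \<longleftrightarrow> {f u, f v} \<in> E"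
    "\<And>u. u \<in> V' \<Longrightarrow> L u = lab (f u)"
  shows "represents e E lab S"
  using assms unfolding represents_def by auto

lemma represents_generates: "represents e E lab V \<Longrightarrow> generates e V E"
  unfolding represents_def generates_def by (auto split: prod.splits)

lemma represents_cong:
  assumes "represents e E lab S"
    and "\<And>u v. u \<in> S \<Longrightarrow> v \<in> S \<Longrightarrow> {u, v} \<in> E \<longleftrightarrow> {u, v} \<in> E'"
    and "\<And>u. u \<in> S \<Longrightarrow> lab u = lab' u"
  shows "represents e E' lab' S"
proof -
  obtain V0 E0 L0 where ev: "eval e = (V0, E0, L0)" by (cases "eval e")
  obtain f where f: "bij_betw f V0 S" "\<And>u v. u \<in> V0 \<Longrightarrow> v \<in> V0 \<Longrightarrow> {u, v} \<in> E0 \<longleftrightarrow> {f u, f v} \<in> E"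
    "\<And>u. u \<in> V0 \<Longrightarrow> L0 u = lab (f u)"
    using representsE[OF assms(1) ev] by blast
  have "f u \<in> S" if "u \<in> V0" for u using f(1) that bij_betwE by blast
  then show ?thesis using f assms(2,3) by (intro representsI[OF ev f(1)]) auto
qed

lemma represents_Atom: "{x} \<notin> E \<Longrightarrow> represents (Atom 1 (lab x)) E lab {x}"
  by (rule representsI[where f = "\<lambda>_. x"]) (auto simp: bij_betw_def)

lemma Cons_image_doubleton_iff:
  "{x # a, y # b} \<in> image ((#) z) ` F \<longleftrightarrow> x = z \<and> y = z \<and> {a, b} \<in> F"
proof
  assume "{x # a, y # b} \<in> image ((#) z) ` F"
  then obtain d where d: "d \<in> F" "{x # a, y # b} = (#) z ` d" by blast
  then have "x # a \<in> (#) z ` d" "y # b \<in> (#) z ` d" by blast+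
  then have "x = z" "y = z" by auto
  then have "(#) z ` d = (#) z ` {a, b}" using d(2) by simp
  moreover have "inj ((#) z)" by (simp add: inj_def)
  ultimately have "d = {a, b}" by (metis inj_image_eq_iff)
  then show "x = z \<and> y = z \<and> {a, b} \<in> F" using d(1) \<open>x = z\<close> \<open>y = z\<close> by simp
next
  assume "x = z \<and> y = z \<and> {a, b} \<in> F"
  then show "{x # a, y # b} \<in> image ((#) z) ` F"
    by (intro rev_image_eqI[of "{a, b}"]) auto
qed

lemma represents_Union:
  assumes r1: "represents e1 E lab S1" and r2: "represents e2 E lab S2"
    and disj: "S1 \<inter> S2 = {}" and no_edge: "\<And>u v. u \<in> S1 \<Longrightarrow> v \<in> S2 \<Longrightarrow> {u, v} \<notin> E"
  shows "represents (Union e1 e2) E lab (S1 \<union> S2)"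
proof -
  obtain V1 E1 L1 where ev1: "eval e1 = (V1, E1, L1)" by (cases "eval e1")
  obtain V2 E2 L2 where ev2: "eval e2 = (V2, E2, L2)" by (cases "eval e2")
  obtain f1 where f1: "bij_betw f1 V1 S1" "\<And>u v. u \<in> V1 \<Longrightarrow> v \<in> V1 \<Longrightarrow> {u, v} \<in> E1 \<longleftrightarrow> {f1 u, f1 v} \<in> E"
    "\<And>u. u \<in> V1 \<Longrightarrow> L1 u = lab (f1 u)"
    using representsE[OF r1 ev1] by blast
  obtain f2 where f2: "bij_betw f2 V2 S2" "\<And>u v. u \<in> V2 \<Longrightarrow> v \<in> V2 \<Longrightarrow> {u, v} \<in> E2 \<longleftrightarrow> {f2 u, f2 v} \<in> E"
    "\<And>u. u \<in> V2 \<Longrightarrow> L2 u = lab (f2 u)"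
    using representsE[OF r2 ev2] by blast
  define f where "f p = (case p of 0 # a \<Rightarrow> f1 a | _ # a \<Rightarrow> f2 a | [] \<Rightarrow> undefined)" for p
  have f_simps [simp]: "f (0 # a) = f1 a" "f (Suc n # a) = f2 a" for a n
    unfolding f_def by simp_all
  have in_S: "f1 a \<in> S1" "f2 b \<in> S2" if "a \<in> V1" "b \<in> V2" for a b
    using that f1(1) f2(1) bij_betwE by blast+
  define V' where "V' = (#) 0 ` V1 \<union> (#) 1 ` V2"
  define E' where "E' = image ((#) 0) ` E1 \<union> image ((#) 1) ` E2"
  define L' where "L' p = (case p of 0 # w \<Rightarrow> L1 w | _ # w \<Rightarrow> L2 w | [] \<Rightarrow> {})" for p
  have ev: "eval (Union e1 e2) = (V', E', L')"
    unfolding V'_def E'_def L'_def by (simp add: ev1 ev2)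
  have "bij_betw f V' (S1 \<union> S2)"
    unfolding V'_def
  proof (rule bij_betw_combine)
    show "bij_betw f ((#) 0 ` V1) S1" "bij_betw f ((#) 1 ` V2) S2"
      using f1(1) f2(1) by (auto simp: bij_betw_def inj_on_def image_image)
  qed (use disj in auto)
  moreover have "{p, q} \<in> E' \<longleftrightarrow> {f p, f q} \<in> E" if "p \<in> V'" "q \<in> V'" for p q
  proof -
    have E'_iff: "{x # a, y # b} \<in> E' \<longleftrightarrow> x = 0 \<and> y = 0 \<and> {a, b} \<in> E1 \<or> x = 1 \<and> y = 1 \<and> {a, b} \<in> E2"
      for x y a b
      unfolding E'_def Un_iff Cons_image_doubleton_iff ..
    have no_edge': "{f2 b, f1 a} \<notin> E" if "a \<in> V1" "b \<in> V2" for a b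
      using no_edge[OF in_S[OF that]] by (simp add: insert_commute)
    from that show ?thesis
      unfolding V'_def using f1(2) f2(2) no_edge[OF in_S] no_edge'
      by (elim UnE imageE) (simp_all add: E'_iff)
  qed
  moreover have "L' p = lab (f p)" if "p \<in> V'" for p
    using that f1(3) f2(3) unfolding V'_def L'_def by auto
  ultimately show ?thesis by (rule representsI[OF ev])
qed

lemma represents_Eta:
  assumes "represents e E lab S"
  shows "represents (Eta i j e) (E \<union> {{u, v} |u v. u \<in> S \<and> v \<in> S \<and> i \<in> lab u \<and> j \<in> lab v}) lab S"
proof -
  obtain V0 E0 L0 where ev: "eval e = (V0, E0, L0)" by (cases "eval e")
  obtain f where f: "bij_betw f V0 S" "\<And>u v. u \<in> V0 \<Longrightarrow> v \<in> V0 \<Longrightarrow> {u, v} \<in> E0 \<longleftrightarrow> {f u, f v} \<in> E"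
    "\<And>u. u \<in> V0 \<Longrightarrow> L0 u = lab (f u)"
    using representsE[OF assms ev] by blast
  have pair_iff: "{f p, f q} = {f u, f v} \<longleftrightarrow> {p, q} = {u, v}"
    if "p \<in> V0" "q \<in> V0" "u \<in> V0" "v \<in> V0" for p q u v
    using that inj_on_eq_iff[OF bij_betw_imp_inj_on[OF f(1)]] by (simp add: doubleton_eq_iff)
  have new_edge_iff: "(\<exists>u v. {p, q} = {u, v} \<and> u \<in> V0 \<and> v \<in> V0 \<and> i \<in> L0 u \<and> j \<in> L0 v)
      \<longleftrightarrow> (\<exists>u v. {f p, f q} = {u, v} \<and> u \<in> S \<and> v \<in> S \<and> i \<in> lab u \<and> j \<in> lab v)"
    if "p \<in> V0" "q \<in> V0" for p q
  proof
    assume "\<exists>u v. {p, q} = {u, v} \<and> u \<in> V0 \<and> v \<in> V0 \<and> i \<in> L0 u \<and> j \<in> L0 v"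
    then obtain u v where "{p, q} = {u, v}" "u \<in> V0" "v \<in> V0" "i \<in> L0 u" "j \<in> L0 v" by blast
    then show "\<exists>u v. {f p, f q} = {u, v} \<and> u \<in> S \<and> v \<in> S \<and> i \<in> lab u \<and> j \<in> lab v"
      using f(3) bij_betwE[OF f(1)] by (intro exI[of _ "f u"] exI[of _ "f v"]) (auto simp: doubleton_eq_iff)
  next
    assume "\<exists>u v. {f p, f q} = {u, v} \<and> u \<in> S \<and> v \<in> S \<and> i \<in> lab u \<and> j \<in> lab v"
    then obtain u v where "{f p, f q} = {f u, f v}" "u \<in> V0" "v \<in> V0" "i \<in> lab (f u)" "j \<in> lab (f v)"
      using f(1) unfolding bij_betw_def by blast
    then show "\<exists>u v. {p, q} = {u, v} \<and> u \<in> V0 \<and> v \<in> V0 \<and> i \<in> L0 u \<and> j \<in> L0 v"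
      using that f(3) pair_iff by metis
  qed
  have ev': "eval (Eta i j e) =
      (V0, E0 \<union> {{u, v} |u v. u \<in> V0 \<and> v \<in> V0 \<and> i \<in> L0 u \<and> j \<in> L0 v}, L0)"
    by (simp add: ev)
  show ?thesis
    by (rule representsI[OF ev' f(1)]) (simp_all only: Un_iff mem_Collect_eq new_edge_iff f(2,3))
qed

lemma represents_Eps:
  "represents e E lab S \<Longrightarrow> represents (Eps i e) E (\<lambda>v. lab v - {i}) S"
  unfolding represents_def by (auto split: prod.splits)

lemma represents_Rho:
  "represents e E lab S \<Longrightarrow>
    represents (Rho i T e) E (\<lambda>v. if i \<in> lab v then lab v - {i} \<union> T else lab v) S"
  unfolding represents_def by (auto split: prod.splits)

lemma mexpr_ok_EtaI:
  assumes "represents e E lab S" "mexpr_ok k e" "i \<in> {1..k}" "j \<in> {1..k}"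
    and "\<And>v. v \<in> S \<Longrightarrow> i \<in> lab v \<Longrightarrow> j \<notin> lab v"
  shows "mexpr_ok k (Eta i j e)"
  using assms unfolding represents_def by (auto split: prod.splits dest: bij_betwE)

section \<open>Building the graph bag by bag\<close>

definition nbr :: "'a set set \<Rightarrow> 'a \<Rightarrow> 'a set" where
  "nbr E x = {y. {x, y} \<in> E}"

text \<open>The fresh label \<open>k\<close> marks the new vertex while it is joined to the vertices expecting a
  neighbour of colour \<open>i\<close>; afterwards colour \<open>i\<close> is no longer pending and the mark is replaced by
  the colours \<open>T\<close> the new vertex itself still waits for.\<close>

definition insert_vertex_expr :: "nat \<Rightarrow> nat \<Rightarrow> nat set \<Rightarrow> mexpr \<Rightarrow> mexpr" where
  "insert_vertex_expr k i T e = Rho k T (Eps i (Eta k i (Union (Atom 1 {k}) e)))"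

locale coloured_graph =
  fixes V :: "'a set" and E :: "'a set set" and c :: "'a \<Rightarrow> nat" and K :: nat
  assumes graph: "graph V E" and finite_V: "finite V" and colour: "\<And>y. y \<in> V \<Longrightarrow> c y \<in> {1..K}"
begin

definition pending :: "'a set \<Rightarrow> 'a \<Rightarrow> nat set" where
  "pending S v = c ` (nbr E v - S)"

definition expressible :: "'a set \<Rightarrow> bool" where
  "expressible S \<longleftrightarrow> (\<exists>e. mexpr_ok (Suc K) e \<and> represents e E (pending S) S)"

lemma edge_in_V: "{x, y} \<in> E \<Longrightarrow> x \<in> V \<and> y \<in> V \<and> x \<noteq> y"
  using graph unfolding graph_def by (metis doubleton_eq_iff)

lemma no_loop: "{x} \<notin> E"
  using edge_in_V[of x x] by auto

lemma nbr_subset_V: "nbr E x \<subseteq> V"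
  unfolding nbr_def using edge_in_V by blast

lemma pending_colours: "pending S v \<subseteq> {1..K}"
  unfolding pending_def using nbr_subset_V colour by blast

lemma expressible_singleton: "expressible {x}"
  unfolding expressible_def
proof (intro exI conjI)
  show "represents (Atom 1 (pending {x} x)) E (pending {x}) {x}" by (rule represents_Atom[OF no_loop])
  show "mexpr_ok (Suc K) (Atom 1 (pending {x} x))" using pending_colours[of "{x}" x] by auto
qed

lemma expressible_union:
  assumes "expressible S1" "expressible S2" "S1 \<inter> S2 = {}"
    and no_edge: "\<And>u v. u \<in> S1 \<Longrightarrow> v \<in> S2 \<Longrightarrow> {u, v} \<notin> E"
  shows "expressible (S1 \<union> S2)"
proof -
  obtain e1 e2 where ok: "mexpr_ok (Suc K) e1" "mexpr_ok (Suc K) e2"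
    and r: "represents e1 E (pending S1) S1" "represents e2 E (pending S2) S2"
    using assms(1,2) unfolding expressible_def by blast
  have "nbr E u - (S1 \<union> S2) = nbr E u - S1" if "u \<in> S1" for u
    using no_edge[OF that] unfolding nbr_def by blast
  then have "represents e1 E (pending (S1 \<union> S2)) S1"
    by (intro represents_cong[OF r(1)]) (simp_all add: pending_def)
  moreover have "nbr E v - (S1 \<union> S2) = nbr E v - S2" if "v \<in> S2" for v
    using no_edge[OF _ that] unfolding nbr_def by (auto simp: insert_commute)
  then have "represents e2 E (pending (S1 \<union> S2)) S2"
    by (intro represents_cong[OF r(2)]) (simp_all add: pending_def)
  ultimately have "represents (Union e1 e2) E (pending (S1 \<union> S2)) (S1 \<union> S2)"
    using assms(3) no_edge by (rule represents_Union)
  then show ?thesis using ok unfolding expressible_def by (intro exI[of _ "Union e1 e2"]) simp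
qed

definition marked :: "'a set \<Rightarrow> 'a \<Rightarrow> 'a \<Rightarrow> nat set" where
  "marked S x v = (if v = x then {Suc K} else pending S v)"

lemma fresh_in_marked: "Suc K \<in> marked S x v \<longleftrightarrow> v = x"
  using pending_colours[of S v] unfolding marked_def by auto

lemma colour_in_marked:
  assumes "x \<notin> S" "v \<in> S"
    and distinct: "\<And>y. y \<in> nbr E v - S \<Longrightarrow> y \<noteq> x \<Longrightarrow> c y \<noteq> c x"
  shows "c x \<in> marked S x v \<longleftrightarrow> {v, x} \<in> E"
proof
  assume "c x \<in> marked S x v"
  then obtain y where "y \<in> nbr E v - S" "c y = c x"
    using assms(1,2) unfolding marked_def pending_def by (auto split: if_splits)
  then show "{v, x} \<in> E" using distinct unfolding nbr_def by fastforce
qed (use assms(1,2) in \<open>auto simp: marked_def pending_def nbr_def\<close>)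

lemma represents_marked_union:
  assumes "represents e E (pending S) S" "x \<notin> S"
  shows "represents (Union (Atom 1 {Suc K}) e) {d \<in> E. x \<notin> d} (marked S x) (insert x S)"
proof -
  have "represents (Atom 1 (marked S x x)) {d \<in> E. x \<notin> d} (marked S x) {x}"
    by (rule represents_Atom) simp
  moreover have "represents e {d \<in> E. x \<notin> d} (marked S x) S"
    by (rule represents_cong[OF assms(1)]) (use assms(2) in \<open>auto simp: marked_def\<close>)
  ultimately show ?thesis
    using represents_Union[of _ "{d \<in> E. x \<notin> d}" "marked S x" "{x}" e S] assms(2)
    by (simp add: marked_def)
qed

lemma marked_join_edges:
  assumes "x \<in> V" "x \<notin> S" "u \<in> insert x S" "v \<in> insert x S"
    and distinct: "\<And>w y. w \<in> S \<Longrightarrow> y \<in> nbr E w - S \<Longrightarrow> y \<noteq> x \<Longrightarrow> c y \<noteq> c x"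
  shows "{u, v} \<in> {d \<in> E. x \<notin> d} \<union> {{u', v'} |u' v'. u' \<in> insert x S \<and> v' \<in> insert x S
      \<and> Suc K \<in> marked S x u' \<and> c x \<in> marked S x v'} \<longleftrightarrow> {u, v} \<in> E"
proof (cases "x \<in> {u, v}")
  case False
  then show ?thesis using fresh_in_marked by (auto simp: doubleton_eq_iff)
next
  case True
  then obtain w where w: "{u, v} = {x, w}" "w \<in> insert x S" using assms(3,4) by auto
  have "c x \<notin> marked S x x" using colour[OF assms(1)] by (simp add: marked_def)
  then have "{x, w} \<in> {{u', v'} |u' v'. u' \<in> insert x S \<and> v' \<in> insert x S
      \<and> Suc K \<in> marked S x u' \<and> c x \<in> marked S x v'} \<longleftrightarrow> c x \<in> marked S x w"
    using w(2) fresh_in_marked by (auto simp: doubleton_eq_iff)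
  moreover have "c x \<in> marked S x w \<longleftrightarrow> {x, w} \<in> E"
    using w(2) colour_in_marked[OF assms(2) _ distinct] no_loop \<open>c x \<notin> marked S x x\<close>
    by (auto simp: insert_commute)
  ultimately show ?thesis using w(1) by simp
qed

lemma expressible_insert:
  assumes "expressible S" "x \<in> V" "x \<notin> S"
    and distinct: "\<And>u y. u \<in> S \<Longrightarrow> y \<in> nbr E u - S \<Longrightarrow> y \<noteq> x \<Longrightarrow> c y \<noteq> c x"
  shows "expressible (insert x S)"
proof -
  obtain e where ok: "mexpr_ok (Suc K) e" and r: "represents e E (pending S) S"
    using assms(1) unfolding expressible_def by blast
  have cx: "c x \<in> {1..K}" using colour[OF assms(2)] .
  let ?e1 = "Union (Atom 1 {Suc K}) e" and ?T = "pending (insert x S) x"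
  note r1 = represents_marked_union[OF r assms(3)]
  have r2: "represents (Eta (Suc K) (c x) ?e1) E (marked S x) (insert x S)"
    using marked_join_edges[OF assms(2,3) _ _ distinct]
    by (intro represents_cong[OF represents_Eta[OF r1]]) simp_all
  have "represents (insert_vertex_expr (Suc K) (c x) ?T e) E (pending (insert x S)) (insert x S)"
    unfolding insert_vertex_expr_def
  proof (rule represents_cong[OF represents_Rho[OF represents_Eps[OF r2]]])
    fix v assume "v \<in> insert x S"
    show "(if Suc K \<in> marked S x v - {c x} then marked S x v - {c x} - {Suc K} \<union> ?T
        else marked S x v - {c x}) = pending (insert x S) v"
    proof (cases "v = x")
      case False
      then have "v \<in> S" using \<open>v \<in> insert x S\<close> by simp
      have "pending S v - {c x} = pending (insert x S) v"
        using distinct[OF \<open>v \<in> S\<close>] unfolding pending_def by auto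
      moreover have "Suc K \<notin> pending S v" using pending_colours[of S v] by auto
      ultimately show ?thesis using False by (auto simp: marked_def)
    qed (use cx in \<open>simp add: marked_def\<close>)
  qed simp
  moreover have "mexpr_ok (Suc K) (insert_vertex_expr (Suc K) (c x) ?T e)"
  proof -
    have "mexpr_ok (Suc K) (Eta (Suc K) (c x) ?e1)"
      using cx ok fresh_in_marked by (intro mexpr_ok_EtaI[OF r1]) (auto simp: marked_def)
    then show ?thesis
      using cx pending_colours[of "insert x S" x] by (auto simp: insert_vertex_expr_def)
  qed
  ultimately show ?thesis unfolding expressible_def by blast
qed

definition expressible_or_empty :: "'a set \<Rightarrow> bool" where
  "expressible_or_empty S \<longleftrightarrow> S = {} \<or> expressible S"

lemma expressible_or_empty_insert:
  assumes "expressible_or_empty S" "x \<in> V" "x \<notin> S"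
    and "\<And>u y. u \<in> S \<Longrightarrow> y \<in> nbr E u - S \<Longrightarrow> y \<noteq> x \<Longrightarrow> c y \<noteq> c x"
  shows "expressible_or_empty (insert x S)"
  using assms expressible_singleton expressible_insert
  unfolding expressible_or_empty_def by blast

lemma expressible_or_empty_union:
  assumes "expressible_or_empty S1" "expressible_or_empty S2" "S1 \<inter> S2 = {}"
    and "\<And>u v. u \<in> S1 \<Longrightarrow> v \<in> S2 \<Longrightarrow> {u, v} \<notin> E"
  shows "expressible_or_empty (S1 \<union> S2)"
  using assms expressible_union unfolding expressible_or_empty_def by (cases "S1 = {}") auto

lemma expressible_or_empty_add_bag:
  assumes "expressible_or_empty S" "finite X" "X \<subseteq> W" "W \<subseteq> V" "S \<inter> W = {}" "inj_on c W"
    and closed: "\<And>u. u \<in> S \<union> X \<Longrightarrow> nbr E u \<subseteq> S \<union> W"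
  shows "expressible_or_empty (S \<union> X)"
proof -
  have "expressible_or_empty (S \<union> Y)" if "finite Y" "Y \<subseteq> X" for Y
    using that
  proof (induction Y rule: finite_induct)
    case (insert a Y)
    have "expressible_or_empty (insert a (S \<union> Y))"
    proof (rule expressible_or_empty_insert)
      show "expressible_or_empty (S \<union> Y)" using insert by blast
      show "a \<in> V" "a \<notin> S \<union> Y" using insert assms(3-5) by auto
      fix u y assume "u \<in> S \<union> Y" "y \<in> nbr E u - (S \<union> Y)" "y \<noteq> a"
      then have "y \<in> W" using closed[of u] insert.prems by blast
      then show "c y \<noteq> c a"
        using \<open>y \<noteq> a\<close> insert.prems assms(3,6) by (auto dest: inj_onD)
    qed
    then show ?case by simp
  qed (use assms(1) in simp)
  then show ?thesis using assms(2) by blast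
qed

lemma expressible_or_empty_join_halves:
  assumes conn: "connected_bags N TE B" and cut: "edge_cut TE A r s"
    and r: "r \<in> N \<inter> A" and s: "s \<in> N \<inter> - A"
    and bags: "\<forall>i\<in>N. B i \<subseteq> V" "\<forall>i\<in>N. inj_on c (B i)"
    and covered: "\<forall>u\<in>(\<Union>i\<in>N. B i) - B r. \<forall>w. {u, w} \<in> E \<longrightarrow> (\<exists>i\<in>N. u \<in> B i \<and> w \<in> B i)"
    and half1: "expressible_or_empty ((\<Union>i\<in>N \<inter> A. B i) - B r)"
    and half2: "expressible_or_empty ((\<Union>i\<in>N \<inter> - A. B i) - B s)"
  shows "expressible_or_empty ((\<Union>i\<in>N. B i) - B r)"
proof -
  define U1 where "U1 = (\<Union>i\<in>N \<inter> A. B i)"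
  define U2 where "U2 = (\<Union>i\<in>N \<inter> - A. B i)"
  have shared: "v \<in> B r \<and> v \<in> B s" if "v \<in> U1" "v \<in> U2" for v
    using that bag_across_cut[OF conn cut] unfolding U1_def U2_def by blast
  have "B r \<subseteq> U1" "B s \<subseteq> U2" using r s unfolding U1_def U2_def by blast+
  note on_side = covered_edge_on_side[OF conn cut covered]
  have "expressible_or_empty (U2 - B s \<union> (B s - B r))"
  proof (rule expressible_or_empty_add_bag[where W = "B s"])
    fix u y assume u: "u \<in> U2 - B s \<union> (B s - B r)"
    obtain j where "j \<in> N \<inter> - A" "u \<in> B j" "u \<notin> B r"
      using u s shared \<open>B r \<subseteq> U1\<close> unfolding U2_def by blast
    then show "nbr E u \<subseteq> U2 - B s \<union> B s"
      using on_side[of "- A" j u] unfolding nbr_def U2_def by blast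
  qed (use half2 bags s finite_subset[OF _ finite_V] in \<open>auto simp: U2_def\<close>)
  moreover have "U2 - B s \<union> (B s - B r) = U2 - B r"
    using \<open>B s \<subseteq> U2\<close> \<open>B r \<subseteq> U1\<close> shared by blast
  moreover have "{u, w} \<notin> E" if u: "u \<in> U1 - B r" and w: "w \<in> U2 - B r" for u w
  proof
    assume "{u, w} \<in> E"
    obtain j where "j \<in> N \<inter> A" "u \<in> B j" using u unfolding U1_def by blast
    then have "w \<in> U1" using on_side[of A j u w] u \<open>{u, w} \<in> E\<close> unfolding U1_def by blast
    then show False using w shared by blast
  qed
  ultimately have "expressible_or_empty ((U1 - B r) \<union> (U2 - B r))"
    using half1[folded U1_def] shared by (intro expressible_or_empty_union) auto
  moreover have "(\<Union>i\<in>N. B i) = U1 \<union> U2" unfolding U1_def U2_def by blast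
  ultimately show ?thesis by (simp add: Un_Diff)
qed

lemma expressible_or_empty_subtree:
  assumes "is_tree N TE" "r \<in> N" "connected_bags N TE B"
    and "\<forall>i\<in>N. B i \<subseteq> V" "\<forall>i\<in>N. inj_on c (B i)"
    and "\<forall>u\<in>(\<Union>i\<in>N. B i) - B r. \<forall>w. {u, w} \<in> E \<longrightarrow> (\<exists>i\<in>N. u \<in> B i \<and> w \<in> B i)"
  shows "expressible_or_empty ((\<Union>i\<in>N. B i) - B r)"
  using assms
proof (induction "card N" arbitrary: N TE r rule: less_induct)
  case less
  note t = less.prems(1) and r = less.prems(2) and conn = less.prems(3)
    and bags = less.prems(4,5) and covered = less.prems(6)
  show ?case
  proof (cases "N = {r}")
    case True
    then show ?thesis by (simp add: expressible_or_empty_def)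
  next
    case False
    then obtain u where "u \<in> N" "u \<noteq> r" using r by blast
    then obtain s A where cut: "edge_cut TE A r s" and r1: "r \<in> N \<inter> A" and s2: "s \<in> N \<inter> - A"
      and "card (N \<inter> A) < card N" "card (N \<inter> - A) < card N"
      using tree_split[OF t r] by metis
    note IH = less.hyps[OF this(4) is_tree_cut_side[OF t cut] r1 connected_bags_cut_side[OF conn cut]]
      less.hyps[OF this(5) is_tree_cut_side[OF t edge_cut_Compl[OF cut]] s2
        connected_bags_cut_side[OF conn edge_cut_Compl[OF cut]]]
    note on_side = covered_edge_on_side[OF conn cut covered]
    have "expressible_or_empty ((\<Union>i\<in>N \<inter> A. B i) - B r)"
    proof (rule IH(1))
      show "\<forall>u\<in>(\<Union>i\<in>N \<inter> A. B i) - B r. \<forall>w. {u, w} \<in> E \<longrightarrow> (\<exists>i\<in>N \<inter> A. u \<in> B i \<and> w \<in> B i)"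
        using on_side[of A] by blast
    qed (use bags in auto)
    moreover have "expressible_or_empty ((\<Union>i\<in>N \<inter> - A. B i) - B s)"
    proof (rule IH(2))
      have "u \<notin> B r" if "j \<in> N \<inter> - A" "u \<in> B j" "u \<notin> B s" for j u
        using that bag_across_cut(2)[OF conn cut r1, of j u] by blast
      then show "\<forall>u\<in>(\<Union>i\<in>N \<inter> - A. B i) - B s. \<forall>w. {u, w} \<in> E \<longrightarrow>
          (\<exists>i\<in>N \<inter> - A. u \<in> B i \<and> w \<in> B i)"
        using on_side[of "- A"] by blast
    qed (use bags in auto)
    ultimately show ?thesis
      by (rule expressible_or_empty_join_halves[OF conn cut r1 s2 bags covered])
  qed
qed

lemma rainbow_decomposition_generates:
  assumes td: "tree_decomposition V E N TE B" and rainbow: "\<forall>i\<in>N. inj_on c (B i)" and "V \<noteq> {}"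
  shows "\<exists>e. mexpr_ok (Suc K) e \<and> generates e V E"
proof -
  have t: "is_tree N TE" and bags: "\<forall>i\<in>N. B i \<subseteq> V" and cover: "\<forall>v\<in>V. \<exists>i\<in>N. v \<in> B i"
    and edges: "\<forall>u w. {u, w} \<in> E \<longrightarrow> (\<exists>i\<in>N. u \<in> B i \<and> w \<in> B i)"
    using td unfolding tree_decomposition_def by blast+
  obtain r where r: "r \<in> N" using t unfolding is_tree_def by blast
  have U: "(\<Union>i\<in>N. B i) = V" using bags cover by blast
  have "expressible_or_empty (V - B r)"
    using expressible_or_empty_subtree[OF t r tree_decomposition_connected_bags[OF td] bags rainbow]
      edges unfolding U by blast
  moreover have "finite (B r)" "B r \<subseteq> V" using bags r finite_V finite_subset by blast+
  ultimately have "expressible_or_empty (V - B r \<union> B r)"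
    using rainbow r nbr_subset_V
    by (intro expressible_or_empty_add_bag[where W = "B r"]) auto
  then have "expressible V"
    using \<open>B r \<subseteq> V\<close> \<open>V \<noteq> {}\<close> unfolding expressible_or_empty_def by (simp add: Un_absorb2)
  then show ?thesis
    unfolding expressible_def using represents_generates by blast
qed

end

lemma is_tree_singleton: "is_tree {i} {}"
proof -
  have "\<not> has_cycle {i} {}"
  proof
    assume "has_cycle {i} {}"
    then obtain p where p: "length p \<ge> 3" "distinct p" "set p \<subseteq> {i}"
      unfolding has_cycle_def by blast
    then have "length p \<le> card {i}" using distinct_card card_mono by (metis finite.intros)
    then show False using p(1) by simp
  qed
  moreover have "connected_on {i} {}"
    unfolding connected_on_def by (auto intro!: exI[of _ "[i]"])
  ultimately show ?thesis unfolding is_tree_def graph_def by simp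
qed

lemma treewidth_attained:
  assumes "graph V E"
  obtains N TE B where "tree_decomposition V E N TE B" "decomposition_width N B = treewidth V E"
proof -
  have "tree_decomposition V E {0} {} (\<lambda>_. V)"
    using assms is_tree_singleton unfolding tree_decomposition_def graph_def connected_on_def
    by (auto simp: doubleton_eq_iff intro!: exI[of _ "[0]"])
  then have "\<exists>N TE B. tree_decomposition V E N TE B \<and> decomposition_width N B = decomposition_width {0} (\<lambda>_. V)"
    by blast
  then have "\<exists>N TE B. tree_decomposition V E N TE B \<and> decomposition_width N B = treewidth V E"
    unfolding treewidth_def by (rule LeastI)
  then show ?thesis using that by blast
qed

lemma tree_decomposition_rainbow_colouring:
  assumes td: "tree_decomposition V E N TE B" and "finite V"
  obtains c where "\<forall>i\<in>N. inj_on c (B i) \<and> c ` B i \<subseteq> {1..decomposition_width N B + 1}"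
proof -
  let ?C = "{1..decomposition_width N B + 1}"
  have t: "is_tree N TE" and "\<forall>i\<in>N. B i \<subseteq> V" using td unfolding tree_decomposition_def by blast+
  then have "finite (B i)" if "i \<in> N" for i using that \<open>finite V\<close> finite_subset by blast
  moreover have "card (B i) \<le> card ?C" if "i \<in> N" for i
  proof -
    have "card (B i) \<le> Max (card ` B ` N)"
      using that t unfolding is_tree_def by (intro Max_ge) auto
    then show ?thesis unfolding decomposition_width_def by simp
  qed
  ultimately have bags: "\<forall>i\<in>N. finite (B i) \<and> card (B i) \<le> card ?C" by blast
  obtain r where r: "r \<in> N" using t unfolding is_tree_def by blast
  then obtain c0 where c0: "inj_on c0 (B r)" "c0 ` B r \<subseteq> ?C"
    using inj_on_extend_into[of "B r" ?C "{}"] bags by auto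
  obtain c where "\<forall>i\<in>N. inj_on c (B i) \<and> c ` B i \<subseteq> ?C"
    using rainbow_colouring_extend[OF t r tree_decomposition_connected_bags[OF td]
        finite_atLeastAtMost bags c0] by blast
  then show ?thesis by (rule that)
qed

theorem mainTheorem5:
  fixes V :: "'a set" and E :: "'a set set"
  assumes "finite_graph V E" and "V \<noteq> {}"
  shows "mcw V E \<le> treewidth V E + 2"
proof -
  have graph: "graph V E" and fin: "finite V" using assms(1) unfolding finite_graph_def by auto
  obtain N TE B where td: "tree_decomposition V E N TE B"
    and width: "decomposition_width N B = treewidth V E"
    using treewidth_attained[OF graph] by blast
  define K where "K = treewidth V E + 1"
  obtain c where rainbow: "\<forall>i\<in>N. inj_on c (B i) \<and> c ` B i \<subseteq> {1..K}"
    using tree_decomposition_rainbow_colouring[OF td fin] unfolding width K_def by blast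
  have "c y \<in> {1..K}" if y: "y \<in> V" for y
  proof -
    obtain i where "i \<in> N" "y \<in> B i" using y td unfolding tree_decomposition_def by blast
    then have "c ` B i \<subseteq> {1..K}" using rainbow by blast
    then show ?thesis using \<open>y \<in> B i\<close> by (rule subsetD[OF _ imageI])
  qed
  then interpret coloured_graph V E c K
    using graph fin by unfold_locales
  obtain e where "mexpr_ok (Suc K) e" "generates e V E"
    using rainbow_decomposition_generates[OF td _ assms(2)] rainbow by blast
  then have "mcw V E \<le> Suc K" unfolding mcw_def by (intro Least_le) blast
  then show ?thesis unfolding K_def by simp
qed

end
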